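(* Let $M=(S,\Sigma,\delta,s_0,F)$ be a deterministic finite automaton, let $T\ge 1$ be an integer, and for each $s\in S$ let $P(\cdot\mid s)$ and $Q(\cdot\mid s)$ be probability distributions on $\Sigma$. Define distributions $P$ and $Q$ on $\Sigma^T$ by $P(x)=\prod_{t=1}^T P(\sigma_t\mid s_t)$ and $Q(x)=\prod_{t=1}^T Q(\sigma_t\mid s_t)$ for $x=\sigma_1\cdots\sigma_T$, where $s_1\cdots s_{T+1}$ is the state sequence induced by $x$, and let $f^*(x)=\mathbb{1}(s_{T+1}\in F)$. Define $P_t$ on $S$ by $P_1(s')=\mathbb{1}(s'=s_0)$ and $P_t(s')=\mathbb{P}_{s\sim P_{t-1},\sigma\sim P(\cdot\mid s)}[s'=\delta(s,\sigma)]$ for $t\ge2$, and $P_t(s,\sigma)=P_t(s)P(\sigma\mid s)$; define $Q_t(s)$ and $Q_t(s,\sigma)$ analogously using $Q(\cdot\mid s)$. Let $\hat g:S\times\Sigma\to S$ and $\hat h:S\to\{0,1\}$ be arbitrary functions, and define $\hat f:\Sigma^T\to\{0,1\}$ by $\hat f(\sigma_1\cdots\sigma_T)=\hat h(\hat s_{T+1})$, where $\hat s_1=s_0$ and $\hat s_{t+1}=\hat g(\hat s_t,\sigma_t)$. Let $\tilde L_P(\hat f)=\sum_{t=1}^T L_{P_t}(\hat g)+L_{P_{T+1}}(\hat h)$. Then $$L_Q(\hat f)\le \tilde L_P(\hat f)+\sum_{t=1}^T\mathrm{TV}(P_t(s,\sigma),Q_t(s,\sigma))+\mathrm{TV}(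P_{T+1}(s),Q_{T+1}(s)).$$
   Context: A deterministic finite automaton $M=(S,\Sigma,\delta,s_0,F)$ has a finite state set $S$, a finite alphabet $\Sigma$, a transition function $\delta:S\times\Sigma\to S$, an initial state $s_0\in S$ and final states $F\subseteq S$. For $x=\sigma_1\cdots\sigma_T$, the induced state sequence is $s_1=s_0$, $s_{t+1}=\delta(s_t,\sigma_t)$. Losses: $L_Q(\hat f)=\mathbb{P}_{x\sim Q}[\hat f(x)\neq f^*(x)]$; $L_{P_t}(\hat g)=\mathbb{P}_{(s,\sigma)\sim P_t(s,\sigma)}[\hat g(s,\sigma)\neq\delta(s,\sigma)]$; $L_{P_{T+1}}(\hat h)=\mathbb{P}_{s\sim P_{T+1}}[\hat h(s)\neq\mathbb{1}(s\in F)]$. The total variation distance is defined without the factor $1/2$: $\mathrm{TV}(\mu,\nu)=\sum_a|\mu(a)-\nu(a)|$. *)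

theory Defs
  imports Complex_Main
begin

(* States: finite type 's; alphabet: finite type 'a.
   A word x = sigma_1 ... sigma_T is a list of length T; (x ! (t-1)) = sigma_t. *)

(* state reached after reading xs from s: run d s0 (take (t-1) x) = s_t *)
definition run :: "('s \<Rightarrow> 'a \<Rightarrow> 's) \<Rightarrow> 's \<Rightarrow> 'a list \<Rightarrow> 's" where
  "run d s0 xs = foldl d s0 xs"

definition word_prob :: "('s \<Rightarrow> 'a \<Rightarrow> real) \<Rightarrow> ('s \<Rightarrow> 'a \<Rightarrow> 's) \<Rightarrow> 's \<Rightarrow> 'a list \<Rightarrow> real" where
  "word_prob K d s0 x = (\<Prod>t\<in>{1..length x}. K (run d s0 (take (t - 1) x)) (x ! (t - 1)))"

(* state marginals P_t, indexed as in the paper: P_1 = point mass at s0,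
   P_t(s') = sum_{s,sigma} P_{t-1}(s) K(sigma|s) 1(s' = d s sigma) for t >= 2.
   (Index 0 is unused; it is set equal to P_1.) *)
fun state_marg :: "('s::finite \<Rightarrow> 'a::finite \<Rightarrow> real) \<Rightarrow> ('s \<Rightarrow> 'a \<Rightarrow> 's) \<Rightarrow> 's \<Rightarrow> nat \<Rightarrow> 's \<Rightarrow> real" where
  "state_marg K d s0 0 = (\<lambda>s'. if s' = s0 then 1 else 0)"
| "state_marg K d s0 (Suc 0) = (\<lambda>s'. if s' = s0 then 1 else 0)"
| "state_marg K d s0 (Suc (Suc t)) =
     (\<lambda>s'. \<Sum>s\<in>UNIV. \<Sum>\<sigma>\<in>UNIV. state_marg K d s0 (Suc t) s * K s \<sigma> * (if s' = d s \<sigma> then 1 else 0))"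

definition joint_marg :: "('s::finite \<Rightarrow> 'a::finite \<Rightarrow> real) \<Rightarrow> ('s \<Rightarrow> 'a \<Rightarrow> 's) \<Rightarrow> 's \<Rightarrow> nat \<Rightarrow> 's \<Rightarrow> 'a \<Rightarrow> real" where
  "joint_marg K d s0 t s \<sigma> = state_marg K d s0 t s * K s \<sigma>"

(* total variation without the factor 1/2 *)
definition TV_state :: "('s::finite \<Rightarrow> real) \<Rightarrow> ('s \<Rightarrow> real) \<Rightarrow> real" where
  "TV_state \<mu> \<nu> = (\<Sum>s\<in>UNIV. \<bar>\<mu> s - \<nu> s\<bar>)"

definition TV_joint :: "('s::finite \<Rightarrow> 'a::finite \<Rightarrow> real) \<Rightarrow> ('s \<Rightarrow> 'a \<Rightarrow> real) \<Rightarrow> real" where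
  "TV_joint \<mu> \<nu> = (\<Sum>s\<in>UNIV. \<Sum>\<sigma>\<in>UNIV. \<bar>\<mu> s \<sigma> - \<nu> s \<sigma>\<bar>)"

definition word_loss :: "('s \<Rightarrow> 'a \<Rightarrow> real) \<Rightarrow> ('s \<Rightarrow> 'a \<Rightarrow> 's) \<Rightarrow> 's \<Rightarrow> nat
    \<Rightarrow> ('a list \<Rightarrow> bool) \<Rightarrow> ('a list \<Rightarrow> bool) \<Rightarrow> real" where
  "word_loss K d s0 T fh fs =
     (\<Sum>x\<in>{x. length x = T}. word_prob K d s0 x * (if fh x \<noteq> fs x then 1 else 0))"

definition trans_loss :: "('s::finite \<Rightarrow> 'a::finite \<Rightarrow> real) \<Rightarrow> ('s \<Rightarrow> 'a \<Rightarrow> 's) \<Rightarrow> 's \<Rightarrow> nat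
    \<Rightarrow> ('s \<Rightarrow> 'a \<Rightarrow> 's) \<Rightarrow> real" where
  "trans_loss K d s0 t g =
     (\<Sum>s\<in>UNIV. \<Sum>\<sigma>\<in>UNIV. joint_marg K d s0 t s \<sigma> * (if g s \<sigma> \<noteq> d s \<sigma> then 1 else 0))"

definition final_loss :: "('s::finite \<Rightarrow> 'a::finite \<Rightarrow> real) \<Rightarrow> ('s \<Rightarrow> 'a \<Rightarrow> 's) \<Rightarrow> 's \<Rightarrow> nat
    \<Rightarrow> 's set \<Rightarrow> ('s \<Rightarrow> bool) \<Rightarrow> real" where
  "final_loss K d s0 t F h =
     (\<Sum>s\<in>UNIV. state_marg K d s0 t s * (if h s \<noteq> (s \<in> F) then 1 else 0))"

end

theory Submission
  imports Defs
begin

text \<open>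
  On a word x the learned automaton can disagree with the target only if, along the true state
  path of x, some learned transition is wrong or the learned label of the last true state is wrong.
  Under Q the probability of a wrong transition at step t is the loss under the marginal Q_t, so a
  union bound gives L_Q(f) \<le> \<Sum>_t L_{Q_t}(g) + L_{Q_{T+1}}(h). Finally, an indicator loss
  changes by at most the total variation distance when Q_t is replaced by P_t.
\<close>

lemma words_length_Suc_eq:
  "{x. length x = Suc n} = (\<lambda>(y, a). y @ [a]) ` ({y. length y = n} \<times> UNIV)"
proof (intro set_eqI iffI)
  fix x :: "'a list"
  assume "x \<in> {x. length x = Suc n}"
  then have "x = butlast x @ [last x]" and "length (butlast x) = n"
    by (auto intro: append_butlast_last_id[symmetric])
  then show "x \<in> (\<lambda>(y, a). y @ [a]) ` ({y. length y = n} \<times> UNIV)"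
    by (intro image_eqI[where x = "(butlast x, last x)"]) auto
qed auto

lemma sum_words_length_Suc:
  "(\<Sum>x | length x = Suc n. f x) = (\<Sum>y | length y = n. \<Sum>a\<in>UNIV. f (y @ [a]))"
proof -
  have inj: "inj_on (\<lambda>(y, a). y @ [a]) ({y. length y = n} \<times> UNIV)"
    by (auto simp: inj_on_def)
  show ?thesis
    unfolding words_length_Suc_eq sum.reindex[OF inj]
    by (simp add: sum.cartesian_product split_def)
qed

lemma run_snoc: "run d s (xs @ [a]) = d (run d s xs) a"
  by (simp add: run_def)

lemma word_prob_snoc: "word_prob K d s0 (xs @ [a]) = word_prob K d s0 xs * K (run d s0 xs) a"
proof -
  have "(\<Prod>t\<in>{1..length xs}. K (run d s0 (take (t - 1) (xs @ [a]))) ((xs @ [a]) ! (t - 1)))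
      = word_prob K d s0 xs"
    unfolding word_prob_def by (rule prod.cong) (auto simp: nth_append)
  then show ?thesis
    by (simp add: word_prob_def)
qed

lemma word_prob_nonneg:
  assumes "\<And>s \<sigma>. K s \<sigma> \<ge> 0"
  shows "word_prob K d s0 x \<ge> 0"
  unfolding word_prob_def by (intro prod_nonneg) (simp add: assms)

lemma sum_word_prob_take:
  fixes K :: "'s \<Rightarrow> 'a::finite \<Rightarrow> real"
  assumes K_sum: "\<And>s. (\<Sum>\<sigma>\<in>UNIV. K s \<sigma>) = 1"
  shows "(\<Sum>x | length x = n + k. word_prob K d s0 x * f (take n x))
       = (\<Sum>x | length x = n. word_prob K d s0 x * f x)"
proof (induction k)
  case 0
  show ?case by (intro sum.cong) auto
next
  case (Suc k)
  have "(\<Sum>x | length x = n + Suc k. word_prob K d s0 x * f (take n x))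
      = (\<Sum>y | length y = n + k. word_prob K d s0 y * f (take n y) * (\<Sum>a\<in>UNIV. K (run d s0 y) a))"
    unfolding add_Suc_right sum_words_length_Suc
    by (intro sum.cong) (auto simp: word_prob_snoc sum_distrib_left mult_ac)
  with Suc.IH show ?case
    by (simp add: K_sum)
qed

lemma sum_state_marg_Suc_Suc:
  fixes K :: "'s::finite \<Rightarrow> 'a::finite \<Rightarrow> real"
  shows "(\<Sum>s'\<in>UNIV. state_marg K d s0 (Suc (Suc n)) s' * f s')
       = (\<Sum>s\<in>UNIV. state_marg K d s0 (Suc n) s * (\<Sum>\<sigma>\<in>UNIV. K s \<sigma> * f (d s \<sigma>)))"
proof -
  have "(\<Sum>s'\<in>UNIV. state_marg K d s0 (Suc (Suc n)) s' * f s')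
      = (\<Sum>s'\<in>UNIV. \<Sum>s\<in>UNIV. \<Sum>\<sigma>\<in>UNIV. if s' = d s \<sigma> then state_marg K d s0 (Suc n) s * K s \<sigma> * f s' else 0)"
    by (auto simp: sum_distrib_right intro!: sum.cong)
  also have "\<dots> = (\<Sum>s\<in>UNIV. \<Sum>\<sigma>\<in>UNIV. \<Sum>s'\<in>UNIV. if s' = d s \<sigma> then state_marg K d s0 (Suc n) s * K s \<sigma> * f s' else 0)"
    by (rule trans[OF sum.swap]) (rule sum.cong[OF refl], rule sum.swap)
  finally show ?thesis
    by (simp add: sum_distrib_left mult_ac)
qed

lemma sum_word_prob_run:
  fixes K :: "'s::finite \<Rightarrow> 'a::finite \<Rightarrow> real"
  shows "(\<Sum>x | length x = n. word_prob K d s0 x * f (run d s0 x))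
       = (\<Sum>s\<in>UNIV. state_marg K d s0 (Suc n) s * f s)"
proof (induction n arbitrary: f)
  case 0
  have "{x::'a list. length x = 0} = {[]}" by auto
  moreover have "(\<Sum>s\<in>UNIV. (if s = s0 then 1 else 0) * f s) = (\<Sum>s\<in>UNIV. if s = s0 then f s else 0)"
    by (intro sum.cong) auto
  ultimately show ?case
    by (simp add: word_prob_def run_def)
next
  case (Suc n)
  have "(\<Sum>x | length x = Suc n. word_prob K d s0 x * f (run d s0 x))
      = (\<Sum>y | length y = n. word_prob K d s0 y * (\<Sum>a\<in>UNIV. K (run d s0 y) a * f (d (run d s0 y) a)))"
    unfolding sum_words_length_Suc
    by (intro sum.cong) (auto simp: word_prob_snoc run_snoc sum_distrib_left mult_ac)
  also have "\<dots> = (\<Sum>s\<in>UNIV. state_marg K d s0 (Suc n) s * (\<Sum>a\<in>UNIV. K s a * f (d s a)))"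
    by (rule Suc.IH)
  finally show ?case
    unfolding sum_state_marg_Suc_Suc .
qed

lemma sum_word_prob_step:
  fixes K :: "'s::finite \<Rightarrow> 'a::finite \<Rightarrow> real"
  assumes K_sum: "\<And>s. (\<Sum>\<sigma>\<in>UNIV. K s \<sigma>) = 1" and "i < n"
  shows "(\<Sum>x | length x = n. word_prob K d s0 x * f (run d s0 (take i x)) (x ! i))
       = (\<Sum>s\<in>UNIV. \<Sum>\<sigma>\<in>UNIV. joint_marg K d s0 (Suc i) s \<sigma> * f s \<sigma>)"
proof -
  define G where "G y = f (run d s0 (butlast y)) (last y)" for y :: "'a list"
  have "(\<Sum>x | length x = n. word_prob K d s0 x * f (run d s0 (take i x)) (x ! i))
      = (\<Sum>x | length x = Suc i + (n - Suc i). word_prob K d s0 x * G (take (Suc i) x))"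
    using \<open>i < n\<close> by (intro sum.cong) (auto simp: G_def take_Suc_conv_app_nth)
  also have "\<dots> = (\<Sum>x | length x = Suc i. word_prob K d s0 x * G x)"
    by (rule sum_word_prob_take[OF K_sum])
  also have "\<dots> = (\<Sum>y | length y = i. word_prob K d s0 y * (\<Sum>a\<in>UNIV. K (run d s0 y) a * f (run d s0 y) a))"
    unfolding sum_words_length_Suc
    by (intro sum.cong) (auto simp: word_prob_snoc G_def sum_distrib_left mult_ac)
  also have "\<dots> = (\<Sum>s\<in>UNIV. state_marg K d s0 (Suc i) s * (\<Sum>a\<in>UNIV. K s a * f s a))"
    by (rule sum_word_prob_run)
  finally show ?thesis
    by (simp add: joint_marg_def sum_distrib_left mult_ac)
qed

lemma run_eq_if_steps_agree:
  assumes "\<forall>i < length x. g (run d s0 (take i x)) (x ! i) = d (run d s0 (take i x)) (x ! i)"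
  shows "run g s0 x = run d s0 x"
  using assms
proof (induction x rule: rev_induct)
  case Nil
  then show ?case by (simp add: run_def)
next
  case (snoc a x)
  have "\<forall>i < length x. g (run d s0 (take i x)) (x ! i) = d (run d s0 (take i x)) (x ! i)"
  proof (intro allI impI)
    fix i assume "i < length x"
    with snoc.prems[rule_format, of i] show "g (run d s0 (take i x)) (x ! i) = d (run d s0 (take i x)) (x ! i)"
      by (simp add: nth_append)
  qed
  then have "run g s0 x = run d s0 x"
    by (rule snoc.IH)
  moreover have "g (run d s0 x) a = d (run d s0 x) a"
    using snoc.prems[rule_format, of "length x"] by simp
  ultimately show ?case
    by (simp add: run_snoc)
qed

lemma run_error_le_step_errors:
  "(if h (run g s0 x) \<noteq> (run d s0 x \<in> F) then 1 else 0 :: real)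
   \<le> (\<Sum>i<length x. if g (run d s0 (take i x)) (x ! i) \<noteq> d (run d s0 (take i x)) (x ! i) then 1 else 0)
     + (if h (run d s0 x) \<noteq> (run d s0 x \<in> F) then 1 else 0)"
  (is "?lhs \<le> (\<Sum>i<length x. ?step i) + ?final")
proof -
  have steps_nonneg: "0 \<le> (\<Sum>i<length x. ?step i)"
    by (intro sum_nonneg) simp
  show ?thesis
  proof (cases "run g s0 x = run d s0 x")
    case True
    then have "?lhs = ?final"
      by simp
    with steps_nonneg show ?thesis
      by linarith
  next
    case False
    have "\<not> (\<forall>i < length x. g (run d s0 (take i x)) (x ! i) = d (run d s0 (take i x)) (x ! i))"
      by (rule contrapos_nn[OF False run_eq_if_steps_agree])
    then obtain i where "i < length x" and "?step i = 1"
      by auto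
    then have "1 \<le> (\<Sum>i<length x. ?step i)"
      using member_le_sum[of i "{..<length x}" ?step] by simp
    moreover have "?lhs \<le> 1" and "0 \<le> ?final"
      by simp_all
    ultimately show ?thesis
      by linarith
  qed
qed

lemma word_loss_le_step_losses:
  fixes K :: "'s::finite \<Rightarrow> 'a::finite \<Rightarrow> real"
  assumes K_nonneg: "\<And>s \<sigma>. K s \<sigma> \<ge> 0" and K_sum: "\<And>s. (\<Sum>\<sigma>\<in>UNIV. K s \<sigma>) = 1"
  shows "word_loss K d s0 T (\<lambda>x. h (run g s0 x)) (\<lambda>x. run d s0 x \<in> F)
       \<le> (\<Sum>t\<in>{1..T}. trans_loss K d s0 t g) + final_loss K d s0 (T + 1) F h"
proof -
  let ?step = "\<lambda>i x. if g (run d s0 (take i x)) (x ! i) \<noteq> d (run d s0 (take i x)) (x ! i) then 1 else (0::real)"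
  let ?final = "\<lambda>s. if h s \<noteq> (s \<in> F) then 1 else (0::real)"
  have "word_loss K d s0 T (\<lambda>x. h (run g s0 x)) (\<lambda>x. run d s0 x \<in> F)
      \<le> (\<Sum>x | length x = T. word_prob K d s0 x * ((\<Sum>i<T. ?step i x) + ?final (run d s0 x)))"
    unfolding word_loss_def
  proof (intro sum_mono mult_left_mono)
    fix x :: "'a list"
    assume "x \<in> {x. length x = T}"
    then show "(if h (run g s0 x) \<noteq> (run d s0 x \<in> F) then 1 else 0) \<le> (\<Sum>i<T. ?step i x) + ?final (run d s0 x)"
      using run_error_le_step_errors[of h g s0 x d F] by simp
  qed (rule word_prob_nonneg[OF K_nonneg])
  also have "\<dots> = (\<Sum>i<T. \<Sum>x | length x = T. word_prob K d s0 x * ?step i x)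
                 + (\<Sum>x | length x = T. word_prob K d s0 x * ?final (run d s0 x))"
    by (simp add: distrib_left sum.distrib sum_distrib_left) (rule sum.swap)
  also have "\<dots> = (\<Sum>i<T. trans_loss K d s0 (Suc i) g) + final_loss K d s0 (T + 1) F h"
  proof -
    have "(\<Sum>x | length x = T. word_prob K d s0 x * ?step i x) = trans_loss K d s0 (Suc i) g"
      if "i < T" for i
      unfolding trans_loss_def
      by (rule sum_word_prob_step[OF K_sum \<open>i < T\<close>, where f = "\<lambda>s \<sigma>. if g s \<sigma> \<noteq> d s \<sigma> then 1 else 0"])
    moreover have "(\<Sum>x | length x = T. word_prob K d s0 x * ?final (run d s0 x)) = final_loss K d s0 (T + 1) F h"
      unfolding final_loss_def Suc_eq_plus1[symmetric] by (rule sum_word_prob_run)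
    ultimately show ?thesis
      by simp
  qed
  finally show ?thesis
    by (simp add: sum.atLeast1_atMost_eq)
qed

lemma trans_loss_le_TV_joint:
  "trans_loss Q d s0 t g \<le> trans_loss P d s0 t g + TV_joint (joint_marg P d s0 t) (joint_marg Q d s0 t)"
proof -
  have "trans_loss Q d s0 t g
      \<le> (\<Sum>s\<in>UNIV. \<Sum>\<sigma>\<in>UNIV. joint_marg P d s0 t s \<sigma> * (if g s \<sigma> \<noteq> d s \<sigma> then 1 else 0)
                            + \<bar>joint_marg P d s0 t s \<sigma> - joint_marg Q d s0 t s \<sigma>\<bar>)"
    unfolding trans_loss_def by (intro sum_mono) auto
  then show ?thesis
    by (simp add: trans_loss_def TV_joint_def sum.distrib)
qed

lemma final_loss_le_TV_state:
  "final_loss Q d s0 t F h \<le> final_loss P d s0 t F h + TV_state (state_marg P d s0 t) (state_marg Q d s0 t)"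
proof -
  have "final_loss Q d s0 t F h
      \<le> (\<Sum>s\<in>UNIV. state_marg P d s0 t s * (if h s \<noteq> (s \<in> F) then 1 else 0)
                   + \<bar>state_marg P d s0 t s - state_marg Q d s0 t s\<bar>)"
    unfolding final_loss_def by (intro sum_mono) auto
  then show ?thesis
    by (simp add: final_loss_def TV_state_def sum.distrib)
qed

theorem theorem4p7:
  fixes \<delta> :: "'s::finite \<Rightarrow> 'a::finite \<Rightarrow> 's"
    and s0 :: 's and F :: "'s set" and T :: nat
    and P Q :: "'s \<Rightarrow> 'a \<Rightarrow> real"
    and g :: "'s \<Rightarrow> 'a \<Rightarrow> 's" and h :: "'s \<Rightarrow> bool"
  assumes T: "T \<ge> 1"
    and P_nonneg: "\<And>s \<sigma>. P s \<sigma> \<ge> 0" and P_sum: "\<And>s. (\<Sum>\<sigma>\<in>UNIV. P s \<sigma>) = 1"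
    and Q_nonneg: "\<And>s \<sigma>. Q s \<sigma> \<ge> 0" and Q_sum: "\<And>s. (\<Sum>\<sigma>\<in>UNIV. Q s \<sigma>) = 1"
  shows "word_loss Q \<delta> s0 T (\<lambda>x. h (run g s0 x)) (\<lambda>x. run \<delta> s0 x \<in> F)
         \<le> (\<Sum>t\<in>{1..T}. trans_loss P \<delta> s0 t g) + final_loss P \<delta> s0 (T + 1) F h
           + (\<Sum>t\<in>{1..T}. TV_joint (joint_marg P \<delta> s0 t) (joint_marg Q \<delta> s0 t))
           + TV_state (state_marg P \<delta> s0 (T + 1)) (state_marg Q \<delta> s0 (T + 1))"
proof -
  have "word_loss Q \<delta> s0 T (\<lambda>x. h (run g s0 x)) (\<lambda>x. run \<delta> s0 x \<in> F)
      \<le> (\<Sum>t\<in>{1..T}. trans_loss Q \<delta> s0 t g) + final_loss Q \<delta> s0 (T + 1) F h"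
    by (rule word_loss_le_step_losses[OF Q_nonneg Q_sum])
  also have "\<dots> \<le> (\<Sum>t\<in>{1..T}. trans_loss P \<delta> s0 t g + TV_joint (joint_marg P \<delta> s0 t) (joint_marg Q \<delta> s0 t))
                 + (final_loss P \<delta> s0 (T + 1) F h + TV_state (state_marg P \<delta> s0 (T + 1)) (state_marg Q \<delta> s0 (T + 1)))"
    by (intro add_mono sum_mono trans_loss_le_TV_joint final_loss_le_TV_state)
  finally show ?thesis
    by (simp add: sum.distrib)
qed

end
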